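(* Let $p=(p_1,p_2,\dots)$ be a probability distribution on $\mathbb{N}$ (possibly of finite support) with $p_1\ge p_2\ge\cdots$ and $p_1\le\frac23$. Let $\pi:\mathbb{N}\times\mathbb{N}\to\mathbb{N}$ be any bijection, and let $\pi p$ denote the probability distribution on $\mathbb{N}\times\mathbb{N}$ given by $(\pi p)(j,k)=p_{\pi(j,k)}$. Then the variation distance between $\pi p$ and $p\otimes p$ (where $(p\otimes p)(j,k)=p_jp_k$) is at least $\frac29$.
   Context: The variation distance between distributions $p,q$ on a countable set is $\frac12\sum_x|p(x)-q(x)|$. *)

theory Defs
  imports "HOL-Analysis.Analysis"
begin

definition var_dist :: "('a \<Rightarrow> real) \<Rightarrow> ('a \<Rightarrow> real) \<Rightarrow> real" where
  "var_dist p q = (1/2) * (\<Sum>\<^sub>\<infinity>x. \<bar>p x - q x\<bar>)"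

definition prob_dist :: "('a \<Rightarrow> real) \<Rightarrow> bool" where
  "prob_dist p \<longleftrightarrow> (\<forall>x. 0 \<le> p x) \<and> (p has_sum 1) UNIV"

end

theory Submission
  imports Defs
begin

text \<open>Let \<open>m\<close> be the least index with \<open>S = p\<^sub>0 + \<dots> + p\<^sub>m\<^sub>-\<^sub>1 \<ge> 1/3\<close>; monotonicity and
  \<open>p\<^sub>0 \<le> 2/3\<close> force \<open>S \<le> 2/3\<close>. The set \<open>A = \<pi>\<^sup>-\<^sup>1{0, \<dots>, m-1}\<close> has \<open>m\<close> elements and
  \<open>\<pi>p\<close>-mass \<open>S\<close>. It lies in the rectangle of its two projections, each of at most \<open>m\<close> indices,
  and among sets of at most \<open>m\<close> indices the initial segment carries the largest \<open>p\<close>-mass, so the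
  \<open>p \<otimes> p\<close>-mass of \<open>A\<close> is at most \<open>S\<^sup>2\<close>. Hence the variation distance is at least
  \<open>S - S\<^sup>2 \<ge> 2/9\<close>.\<close>

lemma sum_diff_le_var_dist:
  fixes q r :: "'a \<Rightarrow> real"
  assumes q: "(q has_sum s) UNIV" and r: "(r has_sum s) UNIV" and A: "finite A"
  shows "(\<Sum>x\<in>A. q x - r x) \<le> var_dist q r"
proof -
  define d where "d x = q x - r x" for x
  have d: "(d has_sum 0) UNIV"
    using has_sum_add[OF q, of "\<lambda>x. - r x" "- s"] r unfolding d_def by (simp add: has_sum_uminus)
  then have "(\<lambda>x. norm (d x)) summable_on UNIV"
    using summable_on_iff_abs_summable_on_real has_sum_imp_summable by blast
  then have abs_d: "((\<lambda>x. \<bar>d x\<bar>) has_sum (\<Sum>\<^sub>\<infinity>x. \<bar>d x\<bar>)) UNIV"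
    by (simp add: has_sum_infsum)
  \<comment> \<open>Flipping the sign of \<open>d\<close> outside \<open>A\<close> gives a function below \<open>\<bar>d\<bar>\<close> whose total sum is
    \<open>2 * (\<Sum>x\<in>A. d x)\<close>, as \<open>d\<close> itself has total sum \<open>0\<close>.\<close>
  have "((\<lambda>x. if x \<in> A then 2 * d x else 0) has_sum (\<Sum>x\<in>A. 2 * d x)) UNIV"
    by (rule has_sum_finite_neutralI[OF A]) auto
  then have "((\<lambda>x. (if x \<in> A then 2 * d x else 0) + - d x) has_sum (\<Sum>x\<in>A. 2 * d x) + 0) UNIV"
    by (rule has_sum_add) (simp add: has_sum_uminus d)
  then have "(\<Sum>x\<in>A. 2 * d x) + 0 \<le> (\<Sum>\<^sub>\<infinity>x. \<bar>d x\<bar>)"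
    using abs_d by (rule has_sum_mono) auto
  then have "2 * (\<Sum>x\<in>A. d x) \<le> (\<Sum>\<^sub>\<infinity>x. \<bar>d x\<bar>)"
    by (simp add: sum_distrib_left)
  then show ?thesis
    unfolding var_dist_def d_def by simp
qed

lemma has_sum_product_nonneg:
  fixes p q :: "'a \<Rightarrow> real"
  assumes "\<And>x. 0 \<le> p x" and p: "(p has_sum a) UNIV"
    and "\<And>y. 0 \<le> q y" and q: "(q has_sum b) UNIV"
  shows "((\<lambda>(x, y). p x * q y) has_sum a * b) UNIV"
proof -
  have rows: "((\<lambda>y. p x * q y) has_sum p x * b) UNIV" for x
    by (rule has_sum_cmult_right[OF q])
  have cols: "((\<lambda>x. p x * b) has_sum a * b) UNIV"
    by (rule has_sum_cmult_left[OF p])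
  moreover have "(\<lambda>(x, y). p x * q y) summable_on UNIV \<times> UNIV"
    using rows has_sum_imp_summable[OF cols] assms by (intro summable_on_SigmaI) auto
  ultimately have "((\<lambda>(x, y). p x * q y) has_sum a * b) (UNIV \<times> UNIV)"
    by (intro has_sum_SigmaI) (simp_all add: rows)
  then show ?thesis
    by simp
qed

lemma antimono_sum_le_sum_lessThan:
  fixes p :: "nat \<Rightarrow> real"
  assumes am: "antimono p" and nonneg: "\<And>n. 0 \<le> p n"
    and R: "finite R" and card_R: "card R \<le> m"
  shows "sum p R \<le> sum p {..<m}"
proof -
  \<comment> \<open>Exchange the part of \<open>R\<close> beyond \<open>m\<close> for the at least as large part of \<open>{..<m}\<close> missing from
    \<open>R\<close>; every term is \<open>\<le> p m\<close> on the first and \<open>\<ge> p m\<close> on the second.\<close>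
  have card_le: "card (R - {..<m}) \<le> card ({..<m} - R)"
    using card_R card_Int_Diff[OF R, of "{..<m}"] card_Int_Diff[of "{..<m}" R]
    by (simp add: Int_commute)
  have "sum p (R - {..<m}) \<le> (\<Sum>_\<in>R - {..<m}. p m)"
    using am by (intro sum_mono) (auto simp: antimono_def)
  also have "\<dots> \<le> (\<Sum>_\<in>{..<m} - R. p m)"
    using card_le nonneg[of m] by (simp add: mult_right_mono)
  also have "\<dots> \<le> sum p ({..<m} - R)"
    using am by (intro sum_mono) (auto simp: antimono_def)
  finally have "sum p (R - {..<m}) \<le> sum p ({..<m} - R)" .
  moreover have "sum p R = sum p (R - {..<m}) + sum p (R \<inter> {..<m})"
    using R by (metis add.commute sum.Int_Diff)
  moreover have "sum p {..<m} = sum p ({..<m} - R) + sum p (R \<inter> {..<m})"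
    by (metis add.commute sum.Int_Diff finite_lessThan Int_commute)
  ultimately show ?thesis
    by linarith
qed

lemma antimono_sum_product_le_square:
  fixes p :: "nat \<Rightarrow> real"
  assumes am: "antimono p" and nonneg: "\<And>n. 0 \<le> p n"
    and A: "finite A" and card_A: "card A \<le> m"
  shows "(\<Sum>(j, k)\<in>A. p j * p k) \<le> (sum p {..<m})\<^sup>2"
proof -
  have proj_le: "sum p (f ` A) \<le> sum p {..<m}" for f :: "nat \<times> nat \<Rightarrow> nat"
    using A card_A card_image_le[OF A, of f]
    by (intro antimono_sum_le_sum_lessThan[OF am nonneg]) auto
  have "(\<Sum>(j, k)\<in>A. p j * p k) \<le> (\<Sum>(j, k)\<in>fst ` A \<times> snd ` A. p j * p k)"
    using A nonneg by (intro sum_mono2) (auto simp: rev_image_eqI)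
  also have "\<dots> = sum p (fst ` A) * sum p (snd ` A)"
    by (simp add: sum_product sum.cartesian_product)
  also have "\<dots> \<le> sum p {..<m} * sum p {..<m}"
    using proj_le nonneg by (intro mult_mono) (auto simp: sum_nonneg)
  finally show ?thesis
    by (simp add: power2_eq_square)
qed

lemma antimono_exists_sum_lessThan_between:
  fixes p :: "nat \<Rightarrow> real"
  assumes "p sums 1" and am: "antimono p" and "p 0 \<le> 2/3"
  obtains m where "1/3 \<le> sum p {..<m}" and "sum p {..<m} \<le> 2/3"
proof -
  define S where "S n = sum p {..<n}" for n
  have "eventually (\<lambda>n. 1/3 < S n) sequentially"
    using assms(1) unfolding sums_def S_def by (rule order_tendstoD(1)) simp
  then obtain n where "1/3 < S n"
    by (auto simp: eventually_sequentially)
  define m where "m = (LEAST n. 1/3 \<le> S n)"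
  have ge: "1/3 \<le> S m"
    unfolding m_def by (rule LeastI[of _ n]) (use \<open>1/3 < S n\<close> in simp)
  have less: "S k < 1/3" if "k < m" for k
    using that not_less_Least unfolding m_def by force
  have "m \<noteq> 0"
    using ge by (intro notI) (simp add: S_def)
  then obtain k where k: "m = Suc k"
    using not0_implies_Suc by blast
  have "S m \<le> 2/3"
  proof (cases "k = 0")
    case True
    then show ?thesis
      using assms(3) k by (simp add: S_def)
  next
    case False
    then have "p 0 < 1/3"
      using less[of 1] k by (simp add: S_def)
    moreover have "p k \<le> p 0"
      using am by (simp add: antimono_def)
    ultimately show ?thesis
      using less[of k] k by (simp add: S_def)
  qed
  with ge show ?thesis
    using that unfolding S_def by blast
qed

lemma bij_betw_vimage:
  assumes "bij f"
  shows "bij_betw f (f -` B) B"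
  using inj_on_subset[OF bij_is_inj[OF assms] subset_UNIV] surj_image_vimage_eq[OF bij_is_surj[OF assms]]
  by (simp add: bij_betw_def)

theorem lemma3p2:
  fixes p :: "nat \<Rightarrow> real" and \<pi> :: "nat \<times> nat \<Rightarrow> nat"
  assumes "prob_dist p"
    and "antimono p"
    and "p 0 \<le> 2/3"
    and "bij \<pi>"
  shows "var_dist (\<lambda>(j, k). p (\<pi> (j, k))) (\<lambda>(j, k). p j * p k) \<ge> 2/9"
proof -
  have nonneg: "\<And>n. 0 \<le> p n" and p: "(p has_sum 1) UNIV"
    using assms(1) unfolding prob_dist_def by auto
  obtain m where ge: "1/3 \<le> sum p {..<m}" and le: "sum p {..<m} \<le> 2/3"
    using antimono_exists_sum_lessThan_between has_sum_imp_sums[OF p] assms(2,3) by blast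
  define A where "A = \<pi> -` {..<m}"
  have bij_A: "bij_betw \<pi> A {..<m}"
    unfolding A_def using assms(4) by (rule bij_betw_vimage)
  then have "finite A" and "card A = m"
    using bij_betw_finite bij_betw_same_card by fastforce+
  have "((\<lambda>x. p (\<pi> x)) has_sum 1) UNIV"
    using p assms(4) by (simp add: has_sum_reindex_bij_betw bij_betw_def)
  moreover have "((\<lambda>(j, k). p j * p k) has_sum 1) UNIV"
    using has_sum_product_nonneg[OF nonneg p nonneg p] by simp
  ultimately have "(\<Sum>x\<in>A. p (\<pi> x) - (\<lambda>(j, k). p j * p k) x)
      \<le> var_dist (\<lambda>x. p (\<pi> x)) (\<lambda>(j, k). p j * p k)"
    using \<open>finite A\<close> by (rule sum_diff_le_var_dist)
  moreover have "(\<Sum>x\<in>A. p (\<pi> x)) = sum p {..<m}"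
    using sum.reindex_bij_betw[OF bij_A] .
  moreover have "(\<Sum>(j, k)\<in>A. p j * p k) \<le> (sum p {..<m})\<^sup>2"
    using antimono_sum_product_le_square[OF assms(2) nonneg \<open>finite A\<close>] \<open>card A = m\<close> by simp
  moreover have "2/9 \<le> sum p {..<m} - (sum p {..<m})\<^sup>2"
    using mult_nonneg_nonneg[of "sum p {..<m} - 1/3" "2/3 - sum p {..<m}"] ge le
    by (simp add: power2_eq_square algebra_simps)
  ultimately show ?thesis
    by (simp add: sum_subtractf case_prod_beta')
qed

end
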